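(* Let $D=(Q,\Sigma,\delta,q_0,A)$ and $D'=(Q',\Sigma,\delta',q_0',A')$ be DFAs over the same alphabet with $L(D)\sim L(D')$. Then $S(D)=S(D')$.
   Context: All DFAs are complete and all states are reachable from the start state. For languages, $L\sim L'$ means the symmetric difference $L\triangle L'$ is finite; this is an equivalence relation, and $[L]$ denotes the equivalence class (language-class) of $L$. For a state $q$ of a DFA $D=(Q,\Sigma,\delta,q_0,A)$, the \emph{induced language} $L(q)$ is the language recognized by $(Q,\Sigma,\delta,q,A)$. Define $S(D)=\{[L(q)]: q\in Q\}$. *)

theory Defs
  imports Main
begin

definition delta_hat :: "('s \<Rightarrow> 'a \<Rightarrow> 's) \<Rightarrow> 's \<Rightarrow> 'a list \<Rightarrow> 's" where
  "delta_hat \<delta> q w = foldl \<delta> q w"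

definition dfa :: "'a set \<Rightarrow> 's set \<Rightarrow> ('s \<Rightarrow> 'a \<Rightarrow> 's) \<Rightarrow> 's \<Rightarrow> 's set \<Rightarrow> bool" where
  "dfa \<Sigma> Q \<delta> q0 A \<longleftrightarrow>
     finite \<Sigma> \<and> finite Q \<and> q0 \<in> Q \<and> A \<subseteq> Q \<and>
     (\<forall>q\<in>Q. \<forall>a\<in>\<Sigma>. \<delta> q a \<in> Q) \<and>
     (\<forall>q\<in>Q. \<exists>w\<in>lists \<Sigma>. delta_hat \<delta> q0 w = q)"

definition lang :: "'a set \<Rightarrow> ('s \<Rightarrow> 'a \<Rightarrow> 's) \<Rightarrow> 's \<Rightarrow> 's set \<Rightarrow> 'a list set" where
  "lang \<Sigma> \<delta> q A = {w \<in> lists \<Sigma>. delta_hat \<delta> q w \<in> A}"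

definition almost_eq :: "'a list set \<Rightarrow> 'a list set \<Rightarrow> bool" where
  "almost_eq L L' \<longleftrightarrow> finite ((L - L') \<union> (L' - L))"

definition lang_class :: "'a set \<Rightarrow> 'a list set \<Rightarrow> 'a list set set" where
  "lang_class \<Sigma> L = {L'. L' \<subseteq> lists \<Sigma> \<and> almost_eq L L'}"

definition S_dfa :: "'a set \<Rightarrow> 's set \<Rightarrow> ('s \<Rightarrow> 'a \<Rightarrow> 's) \<Rightarrow> 's set \<Rightarrow> 'a list set set set" where
  "S_dfa \<Sigma> Q \<delta> A = (\<lambda>q. lang_class \<Sigma> (lang \<Sigma> \<delta> q A)) ` Q"

end

theory Submission
  imports Defs
begin

text \<open>Every state q of D is reached by some word w, and L(q) is then the left quotient of L(D)
  by w. Left quotients by a fixed word preserve finite symmetric differences, so L(q) is almost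
  equal to the left quotient of L(D') by w, which is the induced language of the state that D'
  reaches on w. Hence S(D) \<subseteq> S(D'), and the converse holds by symmetry.\<close>

definition left_quotient :: "'a list \<Rightarrow> 'a list set \<Rightarrow> 'a list set" where
  "left_quotient w L = {v. w @ v \<in> L}"

lemma almost_eq_sym: "almost_eq L M \<Longrightarrow> almost_eq M L"
  unfolding almost_eq_def by (simp add: Un_commute)

lemma almost_eq_trans: "almost_eq L M \<Longrightarrow> almost_eq M N \<Longrightarrow> almost_eq L N"
  unfolding almost_eq_def
  by (rule finite_subset[of _ "(L - M) \<union> (M - L) \<union> ((M - N) \<union> (N - M))"]) auto

lemma almost_eq_left_quotient:
  assumes "almost_eq L M"
  shows "almost_eq (left_quotient w L) (left_quotient w M)"
proof -
  have "finite ((@) w -` ((L - M) \<union> (M - L)))"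
    using assms unfolding almost_eq_def by (rule finite_vimageI) (simp add: inj_def)
  then show ?thesis
    unfolding almost_eq_def left_quotient_def by (rule finite_subset[rotated]) auto
qed

lemma lang_class_eqI: "almost_eq L M \<Longrightarrow> lang_class \<Sigma> L = lang_class \<Sigma> M"
  unfolding lang_class_def by (auto intro: almost_eq_trans almost_eq_sym)

lemma lang_delta_hat:
  "w \<in> lists \<Sigma> \<Longrightarrow> lang \<Sigma> \<delta> (delta_hat \<delta> q w) A = left_quotient w (lang \<Sigma> \<delta> q A)"
  by (auto simp: lang_def delta_hat_def left_quotient_def)

lemma delta_hat_closed:
  assumes "\<forall>q\<in>Q. \<forall>a\<in>\<Sigma>. \<delta> q a \<in> Q" and "q \<in> Q" and "w \<in> lists \<Sigma>"
  shows "delta_hat \<delta> q w \<in> Q"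
  using assms(2,3) unfolding delta_hat_def
  by (induction w arbitrary: q) (auto simp: assms(1))

lemma S_dfa_subset:
  assumes D: "dfa \<Sigma> Q \<delta> q0 A"
    and D': "dfa \<Sigma> Q' \<delta>' q0' A'"
    and almost: "almost_eq (lang \<Sigma> \<delta> q0 A) (lang \<Sigma> \<delta>' q0' A')"
  shows "S_dfa \<Sigma> Q \<delta> A \<subseteq> S_dfa \<Sigma> Q' \<delta>' A'"
proof
  fix C assume "C \<in> S_dfa \<Sigma> Q \<delta> A"
  then obtain q where "q \<in> Q" and C: "C = lang_class \<Sigma> (lang \<Sigma> \<delta> q A)"
    unfolding S_dfa_def by blast
  with D obtain w where w: "w \<in> lists \<Sigma>" and q: "delta_hat \<delta> q0 w = q"
    unfolding dfa_def by blast
  define q' where "q' = delta_hat \<delta>' q0' w"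
  have "q' \<in> Q'"
    unfolding q'_def using D' w by (intro delta_hat_closed) (auto simp: dfa_def)
  have "almost_eq (lang \<Sigma> \<delta> q A) (lang \<Sigma> \<delta>' q' A')"
    using almost_eq_left_quotient[OF almost, of w]
    unfolding q'_def q[symmetric] lang_delta_hat[OF w] .
  then have "C = lang_class \<Sigma> (lang \<Sigma> \<delta>' q' A')"
    by (simp add: C lang_class_eqI)
  with \<open>q' \<in> Q'\<close> show "C \<in> S_dfa \<Sigma> Q' \<delta>' A'"
    unfolding S_dfa_def by blast
qed

theorem mainTheorem3:
  fixes \<Sigma> :: "'a set"
    and Q :: "'s set" and \<delta> :: "'s \<Rightarrow> 'a \<Rightarrow> 's" and q0 :: 's and A :: "'s set"
    and Q' :: "'t set" and \<delta>' :: "'t \<Rightarrow> 'a \<Rightarrow> 't" and q0' :: 't and A' :: "'t set"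
  assumes "dfa \<Sigma> Q \<delta> q0 A"
    and "dfa \<Sigma> Q' \<delta>' q0' A'"
    and "almost_eq (lang \<Sigma> \<delta> q0 A) (lang \<Sigma> \<delta>' q0' A')"
  shows "S_dfa \<Sigma> Q \<delta> A = S_dfa \<Sigma> Q' \<delta>' A'"
proof
  show "S_dfa \<Sigma> Q \<delta> A \<subseteq> S_dfa \<Sigma> Q' \<delta>' A'"
    using assms by (rule S_dfa_subset)
  show "S_dfa \<Sigma> Q' \<delta>' A' \<subseteq> S_dfa \<Sigma> Q \<delta> A"
    using assms(2,1) almost_eq_sym[OF assms(3)] by (rule S_dfa_subset)
qed

end
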